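(* Fix an integer $k\ge 2$. For all but $O_k(N^{k-1})$ choices of positive integers $n_1<\cdots<n_k\le N$, the following holds for $F(x)=1+x^{n_1}+\cdots+x^{n_k}$: if $G(x)$ is any $0,1$-polynomial with the same number of terms as $F(x)$ (namely $k+1$) satisfying $F(x)\tilde F(x)=G(x)\tilde G(x)$, then $G(x)\in\{F(x),\tilde F(x)\}$.
   Context: A $0,1$-polynomial is a polynomial each of whose coefficients is $0$ or $1$. For nonzero $f(x)\in\mathbb{R}[x]$, $\tilde f(x)=x^{\deg f}f(1/x)$. The implied constant depends only on $k$. *)

theory Defs
  imports "HOL-Computational_Algebra.Polynomial"
begin

definition zero_one_poly :: "real poly \<Rightarrow> bool" where
  "zero_one_poly p \<longleftrightarrow> (\<forall>i. coeff p i = 0 \<or> coeff p i = 1)"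

definition num_terms :: "real poly \<Rightarrow> nat" where
  "num_terms p = card {i. coeff p i \<noteq> 0}"

definition F_of :: "nat set \<Rightarrow> real poly" where
  "F_of S = 1 + (\<Sum>n\<in>S. monom 1 n)"

text \<open>The reciprocal polynomial x^(deg f) f(1/x) is the library's reflect_poly.\<close>
definition good_set :: "nat \<Rightarrow> nat set \<Rightarrow> bool" where
  "good_set k S \<longleftrightarrow> (\<forall>G. zero_one_poly G \<and> num_terms G = k + 1 \<and>
      F_of S * reflect_poly (F_of S) = G * reflect_poly G
      \<longrightarrow> G = F_of S \<or> G = reflect_poly (F_of S))"

end

theory Submission
  imports Defs
begin

text \<open>Only supports matter. For A = {0} \<union> S with maximum d, the support of F F~ is
  A + (d - A), and a 0,1-polynomial G with G G~ = F F~ has a support B with the same set of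
  differences. If no c \<in> S satisfies a relation \<mu> c + z1 + z2 = y1 + y2 + y3 with \<mu> \<in> {1, 2}
  and the other terms in A - {c}, every positive difference of A is represented uniquely, and
  comparing the representations of the elements of B forces B = A or B = d - A. A set S
  violating this condition is determined, up to O_k(1) choices of c, by its other k - 1
  elements, so there are O_k(N^(k-1)) such sets.\<close>

definition coeff_support :: "'a::zero poly \<Rightarrow> nat set" where
  "coeff_support p = {i. coeff p i \<noteq> 0}"

lemma le_degree_if_in_coeff_support: "i \<in> coeff_support p \<Longrightarrow> i \<le> degree p"
  unfolding coeff_support_def by (simp add: le_degree)

lemma degree_in_coeff_support: "p \<noteq> 0 \<Longrightarrow> degree p \<in> coeff_support p"
  unfolding coeff_support_def by simp

lemma coeff_support_reflect_poly:
  "coeff_support (reflect_poly p) = (\<lambda>i. degree p - i) ` coeff_support p"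
proof (intro equalityI subsetI)
  fix x assume "x \<in> coeff_support (reflect_poly p)"
  then have "x \<le> degree p" "degree p - x \<in> coeff_support p"
    by (auto simp: coeff_support_def coeff_reflect_poly split: if_splits)
  then show "x \<in> (\<lambda>i. degree p - i) ` coeff_support p"
    by (intro image_eqI[of _ _ "degree p - x"]) auto
next
  fix x assume "x \<in> (\<lambda>i. degree p - i) ` coeff_support p"
  then obtain i where i: "i \<in> coeff_support p" "x = degree p - i" by blast
  have "i \<le> degree p" using i(1) by (rule le_degree_if_in_coeff_support)
  with i show "x \<in> coeff_support (reflect_poly p)"
    by (simp add: coeff_support_def coeff_reflect_poly)
qed

lemma coeff_mult_eq_0_iff_nonneg:
  fixes p q :: "'a::linordered_semidom poly"
  assumes "\<And>i. coeff p i \<ge> 0" "\<And>i. coeff q i \<ge> 0"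
  shows "coeff (p * q) n = 0 \<longleftrightarrow> (\<forall>i\<le>n. coeff p i = 0 \<or> coeff q (n - i) = 0)"
  unfolding coeff_mult by (subst sum_nonneg_eq_0_iff) (auto simp: assms)

lemma coeff_support_mult_reflect_poly:
  fixes p :: "'a::linordered_semidom poly"
  assumes "\<And>i. coeff p i \<ge> 0"
  shows "coeff_support (p * reflect_poly p) =
    {i + (degree p - j) | i j. i \<in> coeff_support p \<and> j \<in> coeff_support p}"
proof (intro equalityI subsetI)
  have nonneg: "\<And>i. coeff (reflect_poly p) i \<ge> 0" by (simp add: assms coeff_reflect_poly)
  {
    fix n assume "n \<in> coeff_support (p * reflect_poly p)"
    then obtain i
      where i: "i \<le> n" "i \<in> coeff_support p" "n - i \<in> coeff_support (reflect_poly p)"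
      by (auto simp: coeff_support_def coeff_mult_eq_0_iff_nonneg[OF assms nonneg])
    then obtain j where "j \<in> coeff_support p" "n - i = degree p - j"
      by (auto simp: coeff_support_reflect_poly)
    with i show "n \<in> {i + (degree p - j) | i j. i \<in> coeff_support p \<and> j \<in> coeff_support p}"
      by (intro CollectI exI[of _ i] exI[of _ j]) auto
  next
    fix n assume "n \<in> {i + (degree p - j) | i j. i \<in> coeff_support p \<and> j \<in> coeff_support p}"
    then obtain i j
      where ij: "i \<in> coeff_support p" "j \<in> coeff_support p" "n = i + (degree p - j)"
      by blast
    then have "n - i \<in> coeff_support (reflect_poly p)" by (simp add: coeff_support_reflect_poly)
    with ij show "n \<in> coeff_support (p * reflect_poly p)"
      by (auto simp: coeff_support_def coeff_mult_eq_0_iff_nonneg[OF assms nonneg]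
          intro!: exI[of _ i])
  }
qed

lemma zero_one_poly_eqI:
  assumes "zero_one_poly p" "zero_one_poly q" "coeff_support p = coeff_support q"
  shows "p = q"
proof (rule poly_eqI)
  fix i
  have "coeff p i \<noteq> 0 \<longleftrightarrow> coeff q i \<noteq> 0"
    using assms(3) by (auto simp: coeff_support_def)
  then show "coeff p i = coeff q i"
    using assms(1,2) unfolding zero_one_poly_def by (metis zero_neq_one)
qed

lemma zero_one_poly_nonneg: "zero_one_poly p \<Longrightarrow> coeff p i \<ge> 0"
  unfolding zero_one_poly_def by (metis order.refl zero_le_one)

lemma zero_one_poly_reflect_poly: "zero_one_poly p \<Longrightarrow> zero_one_poly (reflect_poly p)"
  by (simp add: zero_one_poly_def coeff_reflect_poly)

lemma coeff_F_of:
  assumes "finite S" "0 \<notin> S"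
  shows "coeff (F_of S) i = (if i \<in> insert 0 S then 1 else 0)"
proof -
  have "coeff (F_of S) i = (if i = 0 then 1 else 0) + (\<Sum>n\<in>S. if n = i then 1 else 0)"
    by (simp add: F_of_def coeff_sum coeff_monom)
  also have "(\<Sum>n\<in>S. if n = i then 1 else 0 :: real) = (if i \<in> S then 1 else 0)"
    using assms(1) by (simp add: sum.delta)
  finally show ?thesis using assms(2) by auto
qed

lemma zero_one_poly_F_of: "finite S \<Longrightarrow> 0 \<notin> S \<Longrightarrow> zero_one_poly (F_of S)"
  by (simp add: zero_one_poly_def coeff_F_of)

lemma coeff_support_F_of: "finite S \<Longrightarrow> 0 \<notin> S \<Longrightarrow> coeff_support (F_of S) = insert 0 S"
  by (auto simp: coeff_support_def coeff_F_of)

definition relation_roots :: "nat set \<Rightarrow> nat set" where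
  "relation_roots T = {c. \<exists>\<mu>\<in>{1, 2}. \<exists>y1\<in>insert 0 T. \<exists>y2\<in>insert 0 T. \<exists>y3\<in>insert 0 T.
     \<exists>z1\<in>insert 0 T. \<exists>z2\<in>insert 0 T. \<mu> * c + z1 + z2 = y1 + y2 + y3}"

definition avoids_relations :: "nat set \<Rightarrow> bool" where
  "avoids_relations S \<longleftrightarrow> (\<forall>c\<in>S. c \<notin> relation_roots (S - {c}))"

lemma avoids_relationsD:
  assumes "avoids_relations S" "c \<in> S" "\<mu> \<in> {1, 2}"
    "y1 \<in> insert 0 (S - {c})" "y2 \<in> insert 0 (S - {c})" "y3 \<in> insert 0 (S - {c})"
    "z1 \<in> insert 0 (S - {c})" "z2 \<in> insert 0 (S - {c})"
  shows "\<mu> * c + z1 + z2 \<noteq> y1 + y2 + y3"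
  using assms unfolding avoids_relations_def relation_roots_def by blast

lemma avoids_relations_diff_unique:
  assumes free: "avoids_relations S"
    and mem: "p \<in> insert 0 S" "q \<in> insert 0 S" "p' \<in> insert 0 S" "q' \<in> insert 0 S"
    and less: "q < p" "q' < p'" and eq: "p + q' = p' + q"
  shows "p = p' \<and> q = q'"
proof -
  have "\<not> p' < p"
    if "p \<in> insert 0 S" "q \<in> insert 0 S" "p' \<in> insert 0 S" "q' \<in> insert 0 S"
      "q < p" "q' < p'" "p + q' = p' + q" for p q p' q'
  proof
    assume "p' < p"
    with that have "1 * p + q' + 0 \<noteq> p' + q + 0"
      by (intro avoids_relationsD[OF free]) auto
    with that show False by simp
  qed
  from this[OF mem less eq] this[of p' q' p q] mem less eq have "p = p'" by auto
  with eq show ?thesis by simp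
qed

text \<open>Unless p = e, the largest of p, r, e plays the role of c in the excluded relation.\<close>
lemma avoids_relations_diff_diff:
  assumes free: "avoids_relations S"
    and mem: "p \<in> insert 0 S" "q \<in> insert 0 S" "r \<in> insert 0 S"
      "s \<in> insert 0 S" "e \<in> insert 0 S" "f \<in> insert 0 S"
    and less: "q < p" "s < r" "f < e" and eq: "p + s + f = q + r + e"
  shows "p = r \<or> q = s"
proof (rule ccontr)
  assume ne: "\<not> (p = r \<or> q = s)"
  consider "p = e" | "r < p" "e < p" | "p < r" "e < r" | "p < e" "r < e" | "p < e" "r = e"
    using ne by linarith
  then show False
  proof cases
    case 1
    with eq have "r + q = f + s" by simp
    with avoids_relations_diff_unique[OF free mem(3,4,6,2) less(2)] less 1 ne show False
      by linarith
  next
    case 2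
    with mem less have "1 * p + s + f \<noteq> q + r + e"
      by (intro avoids_relationsD[OF free]) auto
    with eq show False by simp
  next
    case 3
    with mem less have "1 * r + q + e \<noteq> p + s + f"
      by (intro avoids_relationsD[OF free]) auto
    with eq show False by simp
  next
    case 4
    with mem less have "1 * e + q + r \<noteq> p + s + f"
      by (intro avoids_relationsD[OF free]) auto
    with eq show False by simp
  next
    case 5
    with mem less have "2 * e + q + 0 \<noteq> p + s + f"
      by (intro avoids_relationsD[OF free]) auto
    with eq 5 show False by simp
  qed
qed

lemma heads_or_tails:
  assumes "d \<in> X" "h d = d" "t d = 0"
    and "\<And>x y. x \<in> X \<Longrightarrow> y \<in> X \<Longrightarrow> h x = h y \<or> t x = t y"
  shows "(\<forall>x\<in>X. t x = 0) \<or> (\<forall>x\<in>X. h x = d)"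
  using assms by metis

text \<open>Each positive b in B is uniquely a difference h b - t b of elements of A. Any two of
  these representations share their head or their tail, and d = d - 0 forces all tails to be 0
  (B = A) or all heads to be d (B = d - A).\<close>
lemma avoids_relations_difference_set_rigid:
  assumes free: "avoids_relations S" and A: "A = insert 0 S"
    and d: "0 < d" "d \<in> A" "\<forall>a\<in>A. a \<le> d"
    and B: "finite B" "card B = card A" "0 \<in> B" "d \<in> B"
    and diff: "\<And>i j. i \<in> B \<Longrightarrow> j \<in> B \<Longrightarrow> j < i \<Longrightarrow>
      \<exists>e\<in>A. \<exists>f\<in>A. f < e \<and> i + f = e + j"
  shows "B = A \<or> B = (\<lambda>a. d - a) ` A"
proof -
  have "finite A" using B by (metis card.infinite card_0_eq empty_iff)
  define X where "X = {b \<in> B. 0 < b}"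
  have "\<forall>b\<in>X. \<exists>p q. p \<in> A \<and> q \<in> A \<and> q < p \<and> b + q = p"
    using diff B(3) unfolding X_def by fastforce
  then obtain h t
    where ht: "\<And>b. b \<in> X \<Longrightarrow> h b \<in> A \<and> t b \<in> A \<and> t b < h b \<and> b + t b = h b"
    by metis
  have unique: "h b = p \<and> t b = q" if "b \<in> X" "p \<in> A" "q \<in> A" "q < p" "b + q = p" for b p q
    using avoids_relations_diff_unique[OF free, of "h b" "t b" p q] ht[OF that(1)] that A by auto
  have dX: "d \<in> X" using d B unfolding X_def by simp
  have hd: "h d = d" and td: "t d = 0" using unique[OF dX d(2)] A d(1) by auto
  have head_or_tail: "h x = h y \<or> t x = t y" if xy: "x \<in> X" "y \<in> X" "y < x" for x y
  proof -
    obtain e f where ef: "e \<in> A" "f \<in> A" "f < e" "x + f = e + y"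
      using diff xy X_def by blast
    have "h x + t y + f = t x + h y + e" using ht[OF xy(1)] ht[OF xy(2)] ef by linarith
    then show ?thesis
      by (rule avoids_relations_diff_diff[OF free, rotated -1])
        (use ht[OF xy(1)] ht[OF xy(2)] ef A in auto)
  qed
  have "h x = h y \<or> t x = t y" if "x \<in> X" "y \<in> X" for x y
    using head_or_tail[OF that] head_or_tail[OF that(2,1)] by (metis linorder_neqE_nat)
  from heads_or_tails[where h = h and t = t, OF dX hd td this] show ?thesis
  proof
    assume "\<forall>x\<in>X. t x = 0"
    then have "B \<subseteq> A" using ht A unfolding X_def by force
    then show ?thesis using card_subset_eq[OF \<open>finite A\<close>] B(2) by simp
  next
    assume "\<forall>x\<in>X. h x = d"
    then have "B \<subseteq> (\<lambda>a. d - a) ` A"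
      using ht d(2) unfolding X_def by (force intro: image_eqI[of _ _ "t _"])
    moreover have "inj_on (\<lambda>a. d - a) A" by (rule inj_onI) (metis d(3) diff_diff_cancel)
    then have "card ((\<lambda>a. d - a) ` A) = card B" using B(2) by (simp add: card_image)
    ultimately show ?thesis using card_subset_eq[of "(\<lambda>a. d - a) ` A" B] \<open>finite A\<close> by simp
  qed
qed

lemma reflected_sumsets_eq_imp_positive_differences:
  fixes A B :: "nat set"
  assumes A: "0 \<in> A" "d \<in> A" "\<forall>a\<in>A. a \<le> d"
    and B: "m \<in> B" "\<forall>b\<in>B. b \<le> m"
    and eq: "{i + (d - j) | i j. i \<in> A \<and> j \<in> A} = {i + (m - j) | i j. i \<in> B \<and> j \<in> B}"
  shows "0 \<in> B" and "m = d"
    and "\<And>i j. i \<in> B \<Longrightarrow> j \<in> B \<Longrightarrow> j < i \<Longrightarrow> \<exists>e\<in>A. \<exists>f\<in>A. f < e \<and> i + f = e + j"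
proof -
  have "0 + (d - d) \<in> {i + (d - j) | i j. i \<in> A \<and> j \<in> A}" using A by blast
  then show B0: "0 \<in> B" unfolding eq by auto
  have "m + (m - 0) \<in> {i + (m - j) | i j. i \<in> B \<and> j \<in> B}" using B B0 by blast
  then have "m \<le> d" unfolding eq[symmetric] using A by fastforce
  moreover have "d + (d - 0) \<in> {i + (d - j) | i j. i \<in> A \<and> j \<in> A}" using A by blast
  then have "d \<le> m" unfolding eq using B by fastforce
  ultimately show md: "m = d" by simp
  fix i j assume ij: "i \<in> B" "j \<in> B" "j < i"
  then have "i + (m - j) \<in> {i + (d - j) | i j. i \<in> A \<and> j \<in> A}" unfolding eq by blast
  then obtain e f where ef: "e \<in> A" "f \<in> A" "i + (d - j) = e + (d - f)" using md by blast
  have "j \<le> d" "f \<le> d" using ij ef A B md by auto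
  then have "i + f = e + j" "f < e" using ef ij by auto
  then show "\<exists>e\<in>A. \<exists>f\<in>A. f < e \<and> i + f = e + j" using ef by blast
qed

lemma coeff_support_eq_F_of_or_reflect_poly:
  assumes free: "avoids_relations S" and S: "finite S" "0 \<notin> S" "S \<noteq> {}"
    and G: "zero_one_poly G" "card (coeff_support G) = card S + 1"
    and eq: "F_of S * reflect_poly (F_of S) = G * reflect_poly G"
  shows "coeff_support G = coeff_support (F_of S) \<or>
    coeff_support G = coeff_support (reflect_poly (F_of S))"
proof -
  define A where "A = insert 0 S"
  define B where "B = coeff_support G"
  define d where "d = degree (F_of S)"
  define m where "m = degree G"
  have A: "coeff_support (F_of S) = A" unfolding A_def by (rule coeff_support_F_of[OF S(1,2)])
  have "card B = card A" using G(2) S unfolding A_def B_def by simp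
  then have B: "finite B" "B \<noteq> {}" using card_gt_0_iff[of B] S unfolding A_def by simp_all
  then have "G \<noteq> 0" unfolding B_def coeff_support_def by auto
  have "F_of S \<noteq> 0" using A unfolding A_def coeff_support_def by auto
  have dA: "d \<in> A" "\<forall>a\<in>A. a \<le> d"
    using A degree_in_coeff_support[OF \<open>F_of S \<noteq> 0\<close>] le_degree_if_in_coeff_support
    unfolding d_def by blast+
  have mB: "m \<in> B" "\<forall>b\<in>B. b \<le> m"
    using degree_in_coeff_support[OF \<open>G \<noteq> 0\<close>] le_degree_if_in_coeff_support
    unfolding B_def m_def by blast+
  obtain s where "s \<in> S" using S(3) by blast
  with S(2) dA have "0 < d" unfolding A_def by (metis insertCI le_zero_eq not_gr_zero)
  have "{i + (d - j) | i j. i \<in> A \<and> j \<in> A} = coeff_support (F_of S * reflect_poly (F_of S))"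
    unfolding d_def A[symmetric]
    by (rule coeff_support_mult_reflect_poly[symmetric, OF zero_one_poly_nonneg])
      (rule zero_one_poly_F_of[OF S(1,2)])
  also have "\<dots> = {i + (m - j) | i j. i \<in> B \<and> j \<in> B}"
    unfolding eq m_def B_def
    by (rule coeff_support_mult_reflect_poly[OF zero_one_poly_nonneg[OF G(1)]])
  finally have sums:
    "{i + (d - j) | i j. i \<in> A \<and> j \<in> A} = {i + (m - j) | i j. i \<in> B \<and> j \<in> B}" .
  have "0 \<in> A" unfolding A_def by simp
  note diffs = reflected_sumsets_eq_imp_positive_differences[OF this dA mB sums]
  have "d \<in> B" using diffs(2) mB(1) by simp
  from avoids_relations_difference_set_rigid[OF free A_def \<open>0 < d\<close> dA B(1) \<open>card B = card A\<close>
      diffs(1) \<open>d \<in> B\<close> diffs(3)]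
  show ?thesis unfolding coeff_support_reflect_poly A B_def d_def by blast
qed

lemma good_set_if_avoids_relations:
  assumes free: "avoids_relations S" and S: "finite S" "0 \<notin> S" "S \<noteq> {}" "card S = k"
  shows "good_set k S"
  unfolding good_set_def
proof (intro allI impI, elim conjE)
  fix G assume G: "zero_one_poly G" "num_terms G = k + 1"
    and eq: "F_of S * reflect_poly (F_of S) = G * reflect_poly G"
  have "card (coeff_support G) = card S + 1"
    using G(2) S(4) unfolding num_terms_def coeff_support_def by simp
  from coeff_support_eq_F_of_or_reflect_poly[OF free S(1-3) G(1) this eq]
  show "G = F_of S \<or> G = reflect_poly (F_of S)"
    using zero_one_poly_eqI[OF G(1)] zero_one_poly_F_of[OF S(1,2)] zero_one_poly_reflect_poly
    by blast
qed

lemma relation_roots_subset: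
  "relation_roots T \<subseteq> (\<lambda>(\<mu>, y1, y2, y3, z1, z2). (y1 + y2 + y3 - z1 - z2) div \<mu>) `
     ({1, 2} \<times> insert 0 T \<times> insert 0 T \<times> insert 0 T \<times> insert 0 T \<times> insert 0 T)"
proof
  fix c assume "c \<in> relation_roots T"
  then obtain \<mu> y1 y2 y3 z1 z2 where mem: "\<mu> \<in> {1, 2}"
    "y1 \<in> insert 0 T" "y2 \<in> insert 0 T" "y3 \<in> insert 0 T" "z1 \<in> insert 0 T" "z2 \<in> insert 0 T"
    and rel: "\<mu> * c + z1 + z2 = y1 + y2 + y3"
    unfolding relation_roots_def by blast
  have "y1 + y2 + y3 - z1 - z2 = \<mu> * c" using rel by linarith
  then have "(y1 + y2 + y3 - z1 - z2) div \<mu> = c" using \<open>\<mu> \<in> {1, 2}\<close> by auto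
  with mem show "c \<in> (\<lambda>(\<mu>, y1, y2, y3, z1, z2). (y1 + y2 + y3 - z1 - z2) div \<mu>) `
     ({1, 2} \<times> insert 0 T \<times> insert 0 T \<times> insert 0 T \<times> insert 0 T \<times> insert 0 T)"
    by (intro image_eqI[where x = "(\<mu>, y1, y2, y3, z1, z2)"])
      (simp_all only: mem_Times_iff fst_conv snd_conv case_prod_conv)
qed

lemma finite_relation_roots: "finite T \<Longrightarrow> finite (relation_roots T)"
  by (rule finite_subset[OF relation_roots_subset]) simp

lemma card_relation_roots_le:
  assumes "finite T"
  shows "card (relation_roots T) \<le> 2 * (card T + 1) ^ 5"
proof -
  let ?A = "insert 0 T"
  have "card (relation_roots T) \<le> card ({1, 2 :: nat} \<times> ?A \<times> ?A \<times> ?A \<times> ?A \<times> ?A)"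
    by (rule order.trans[OF card_mono[OF _ relation_roots_subset] card_image_le])
      (simp_all add: assms)
  also have "\<dots> = 2 * card ?A ^ 5" by (simp only: card_cartesian_product) (simp add: eval_nat_numeral)
  also have "\<dots> \<le> 2 * (card T + 1) ^ 5" using assms by (simp add: card_insert_if)
  finally show ?thesis .
qed

lemma card_not_avoids_relations_le:
  assumes "0 < k"
  shows "card {S. S \<subseteq> {1..N} \<and> card S = k \<and> \<not> avoids_relations S}
    \<le> (N choose (k - 1)) * (2 * k ^ 5)"
proof -
  define Ts where "Ts = {T. T \<subseteq> {1..N} \<and> card T = k - 1}"
  have finite_Ts: "finite Ts" unfolding Ts_def by simp
  have finite_T: "finite T" if "T \<in> Ts" for T
    using that finite_subset unfolding Ts_def by blast
  have "{S. S \<subseteq> {1..N} \<and> card S = k \<and> \<not> avoids_relations S}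
      \<subseteq> (\<Union>T\<in>Ts. (\<lambda>c. insert c T) ` relation_roots T)"
  proof
    fix S assume "S \<in> {S. S \<subseteq> {1..N} \<and> card S = k \<and> \<not> avoids_relations S}"
    then have S: "S \<subseteq> {1..N}" "card S = k" "\<not> avoids_relations S" by auto
    then obtain c where c: "c \<in> S" "c \<in> relation_roots (S - {c})"
      unfolding avoids_relations_def by blast
    have "S - {c} \<in> Ts" using S c(1) finite_subset[OF S(1)] unfolding Ts_def by auto
    moreover have "S = insert c (S - {c})" using c(1) by blast
    ultimately show "S \<in> (\<Union>T\<in>Ts. (\<lambda>c. insert c T) ` relation_roots T)" using c(2) by blast
  qed
  then have "card {S. S \<subseteq> {1..N} \<and> card S = k \<and> \<not> avoids_relations S}
      \<le> card (\<Union>T\<in>Ts. (\<lambda>c. insert c T) ` relation_roots T)"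
    by (rule card_mono[rotated]) (simp add: finite_Ts finite_T finite_relation_roots)
  also have "\<dots> \<le> (\<Sum>T\<in>Ts. card ((\<lambda>c. insert c T) ` relation_roots T))"
    by (rule card_UN_le[OF finite_Ts])
  also have "\<dots> \<le> (\<Sum>T\<in>Ts. 2 * k ^ 5)"
  proof (rule sum_mono)
    fix T assume "T \<in> Ts"
    then have "card T + 1 = k" using assms unfolding Ts_def by simp
    then show "card ((\<lambda>c. insert c T) ` relation_roots T) \<le> 2 * k ^ 5"
      using card_image_le[OF finite_relation_roots] card_relation_roots_le finite_T[OF \<open>T \<in> Ts\<close>]
      by (metis order.trans)
  qed
  also have "\<dots> = (N choose (k - 1)) * (2 * k ^ 5)"
    using n_subsets[of "{1..N}" "k - 1"] unfolding Ts_def by simp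
  finally show ?thesis .
qed

theorem mainTheorem4:
  fixes k :: nat
  assumes "k \<ge> 2"
  shows "\<exists>C::real. \<forall>N::nat.
    real (card {S. S \<subseteq> {1..N} \<and> card S = k \<and> \<not> good_set k S}) \<le> C * real N ^ (k - 1)"
proof (intro exI allI)
  fix N :: nat
  have "{S. S \<subseteq> {1..N} \<and> card S = k \<and> \<not> good_set k S}
      \<subseteq> {S. S \<subseteq> {1..N} \<and> card S = k \<and> \<not> avoids_relations S}"
    using assms finite_subset by (fastforce intro: good_set_if_avoids_relations)
  then have "card {S. S \<subseteq> {1..N} \<and> card S = k \<and> \<not> good_set k S}
      \<le> card {S. S \<subseteq> {1..N} \<and> card S = k \<and> \<not> avoids_relations S}"
    by (rule card_mono[rotated]) simp
  also have "\<dots> \<le> (N choose (k - 1)) * (2 * k ^ 5)"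
    using assms by (intro card_not_avoids_relations_le) simp
  also have "\<dots> \<le> N ^ (k - 1) * (2 * k ^ 5)"
    by (cases "k - 1 \<le> N") (simp_all add: binomial_le_pow binomial_eq_0)
  finally show "real (card {S. S \<subseteq> {1..N} \<and> card S = k \<and> \<not> good_set k S})
      \<le> real (2 * k ^ 5) * real N ^ (k - 1)"
    by (simp add: mult.commute flip: of_nat_power of_nat_mult of_nat_le_iff)
qed

end
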